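(* Let $d$ and $k$ be positive integers and let $p$ be the smallest positive integer such that $k<\kappa_p$. If $d$ does not divide $p$, then there exists a subset $\mathcal{X}$ of $\mathbb{P}^d_\circ$ such that $\kappa(\mathcal{X})\le k$ and $|\mathcal{X}|=\lfloor\lambda(d,k)\rfloor$.
   Context: A point of $\mathbb{Z}^d$ is primitive if its coordinates are relatively prime; $\mathbb{P}^d_\circ$ denotes the set of primitive points of $\mathbb{Z}^d$ whose first non-zero coordinate is positive. For a finite $\mathcal{X}\subset\mathbb{R}^d$, $\kappa(\mathcal{X})=\max_{1\le i\le d}\sum_{x\in\mathcal{X}}|x_i|$. $B(d,p)=\{x\in\mathbb{R}^d:\|x\|_1\le p\}$; $N_p=|B(d,p)\cap\mathbb{P}^d_\circ|$ and $\kappa_p=\kappa(B(d,p)\cap\mathbb{P}^d_\circ)$ (with $N_0=\kappa_0=0$). With $p$ as in the claim, $\lambda(d,k)=N_{p-1}+\frac{d(k-\kappa_{p-1})}{p}$. *)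

theory Defs
  imports Complex_Main
begin

text \<open>Points of Z^d are represented as functions nat => int vanishing outside {..<d}.\<close>

definition zpoints :: "nat \<Rightarrow> (nat \<Rightarrow> int) set" where
  "zpoints d = {x. \<forall>i\<ge>d. x i = 0}"

definition primitive :: "nat \<Rightarrow> (nat \<Rightarrow> int) \<Rightarrow> bool" where
  "primitive d x \<longleftrightarrow> Gcd (x ` {..<d}) = 1"

definition Pcirc :: "nat \<Rightarrow> (nat \<Rightarrow> int) set" where
  "Pcirc d = {x \<in> zpoints d. primitive d x \<and>
       (\<exists>i<d. x i > 0 \<and> (\<forall>j<i. x j = 0))}"

definition kappa :: "nat \<Rightarrow> (nat \<Rightarrow> int) set \<Rightarrow> int" where
  "kappa d X = Max ((\<lambda>i. \<Sum>x\<in>X. \<bar>x i\<bar>) ` {..<d})"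

definition l1norm :: "nat \<Rightarrow> (nat \<Rightarrow> int) \<Rightarrow> int" where
  "l1norm d x = (\<Sum>i<d. \<bar>x i\<bar>)"

definition ballP :: "nat \<Rightarrow> nat \<Rightarrow> (nat \<Rightarrow> int) set" where
  "ballP d p = {x \<in> Pcirc d. l1norm d x \<le> int p}"

definition Np :: "nat \<Rightarrow> nat \<Rightarrow> nat" where
  "Np d p = card (ballP d p)"

definition kappap :: "nat \<Rightarrow> nat \<Rightarrow> int" where
  "kappap d p = kappa d (ballP d p)"

definition pmin :: "nat \<Rightarrow> nat \<Rightarrow> nat" where
  "pmin d k = (LEAST p. p > 0 \<and> int k < kappap d p)"

definition lam :: "nat \<Rightarrow> nat \<Rightarrow> real" where
  "lam d k = (let p = pmin d k in
     real (Np d (p - 1)) + real d * (real k - real_of_int (kappap d (p - 1))) / real p)"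

end

theory Submission
  imports Defs
begin

text \<open>
  Let \<open>T\<close> be the set of points of \<open>P\<^sup>d\<^sub>\<circ>\<close> of \<open>\<ell>\<^sub>1\<close>-norm exactly \<open>p\<close>. Rotating the coordinates
  cyclically and then fixing the sign permutes \<open>T\<close>, with orbits of at most \<open>d\<close> points, and
  every union of orbits has the same load \<open>p/d\<close> per point on each coordinate. The set \<open>X\<close> is
  the ball \<open>B(d, p - 1)\<close>, of load at most \<open>\<kappa>\<^sub>p\<^sub>-\<^sub>1\<close>, together with
  \<open>\<lfloor>d (k - \<kappa>\<^sub>p\<^sub>-\<^sub>1) / p\<rfloor>\<close> points of \<open>T\<close>: as many whole orbits as fit, and the rest
  from the orbit of block points, the residue distributions modulo \<open>d\<close> of \<open>p\<close> consecutive
  integers. Since \<open>d\<close> does not divide \<open>p\<close> these are \<open>d\<close> distinct primitive points, and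
  choosing their intervals adjacent to each other spreads their load evenly, up to rounding.
\<close>

section \<open>Residues modulo \<open>d\<close>\<close>

lemma mod_add_right_cancel_nat: "(a + c) mod d = (b + c) mod d \<longleftrightarrow> a mod d = b mod (d::nat)"
  by (simp add: mod_eq_iff_dvd_symdiff_nat)

lemma inj_on_add_mod_lessThan: "inj_on (\<lambda>i. (i + c) mod d) {..<d::nat}"
  by (rule inj_onI) (simp add: mod_add_right_cancel_nat)

lemma image_add_mod_lessThan: "(\<lambda>i. (i + c) mod d) ` {..<d} = {..<d::nat}"
  by (rule endo_inj_surj) (auto simp: inj_on_add_mod_lessThan)

lemma sum_add_mod_lessThan: "(\<Sum>i<d. g ((i + c) mod d)) = (\<Sum>i<d::nat. g i)"
  using sum.reindex[OF inj_on_add_mod_lessThan[of c d], of g] by (simp add: image_add_mod_lessThan)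

lemma sum_lessThan_add_nat: "(\<Sum>n<a + b. f n) = (\<Sum>n<a. f n) + (\<Sum>n<b. f (a + n))"
  for f :: "nat \<Rightarrow> 'a::comm_monoid_add"
  by (induction b) (simp_all add: add.assoc)

definition residue_count :: "nat \<Rightarrow> nat \<Rightarrow> nat \<Rightarrow> nat \<Rightarrow> nat" where
  "residue_count d s L i = (\<Sum>u<L. if (s + u) mod d = i then 1 else 0)"

lemma residue_count_0 [simp]: "residue_count d s 0 i = 0"
  by (simp add: residue_count_def)

lemma residue_count_add:
  "residue_count d s (L1 + L2) i = residue_count d s L1 i + residue_count d (s + L1) L2 i"
  by (induction L2) (auto simp: residue_count_def add.assoc)

lemma residue_count_mod_start: "residue_count d (s mod d) L i = residue_count d s L i"
  unfolding residue_count_def by (simp add: mod_add_left_eq)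

lemma residue_count_ne_0_iff: "residue_count d s L i \<noteq> 0 \<longleftrightarrow> (\<exists>u<L. (s + u) mod d = i)"
  by (auto simp: residue_count_def)

lemma sum_residue_count:
  assumes "d > 0"
  shows "(\<Sum>i<d. residue_count d s L i) = L"
proof -
  have "(\<Sum>i<d. residue_count d s L i) = (\<Sum>u<L. \<Sum>i<d. if (s + u) mod d = i then 1 else 0)"
    unfolding residue_count_def by (rule sum.swap)
  also have "\<dots> = (\<Sum>u<L. 1)"
    using assms by (intro sum.cong refl) simp
  finally show ?thesis by simp
qed

lemma residue_count_Suc_start:
  assumes "i < d"
  shows "residue_count d (Suc s) L i = residue_count d s L ((i + (d - 1)) mod d)"
proof -
  have "(Suc s + u) mod d = i \<longleftrightarrow> (s + u) mod d = (i + (d - 1)) mod d" for u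
    using mod_add_right_cancel_nat[of "s + u" 1 d "i + (d - 1)"] assms by simp
  then show ?thesis
    unfolding residue_count_def by simp
qed

lemma residue_count_period: "i < d \<Longrightarrow> residue_count d s d i = 1"
  unfolding residue_count_def
  using sum_add_mod_lessThan[of "\<lambda>j. if j = i then 1 else (0::nat)" s d]
  by (simp add: add.commute)

lemma residue_count_mult: "i < d \<Longrightarrow> residue_count d s (d * c) i = c"
proof (induction c arbitrary: s)
  case (Suc c)
  then show ?case
    using residue_count_add[of d s d "d * c" i] residue_count_period by simp
qed simp

lemma residue_count_div_mod:
  assumes "i < d"
  shows "residue_count d s L i = L div d + residue_count d s (L mod d) i"
proof -
  have "residue_count d s L i = residue_count d s (d * (L div d) + L mod d) i"
    by simp
  also have "\<dots> = L div d + residue_count d (s + d * (L div d)) (L mod d) i"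
    using residue_count_add[of d s "d * (L div d)" "L mod d" i]
      residue_count_mult[OF assms, of s "L div d"] by simp
  also have "residue_count d (s + d * (L div d)) (L mod d) i = residue_count d s (L mod d) i"
    by (metis residue_count_mod_start mod_mult_self2)
  finally show ?thesis .
qed

lemma residue_count_le_1: "L \<le> d \<Longrightarrow> i < d \<Longrightarrow> residue_count d s L i \<le> 1"
  using residue_count_add[of d s L "d - L" i] residue_count_period[of i d s] by simp

lemma residue_count_less_ceiling:
  assumes "i < d"
  shows "residue_count d s L i * d < L + d"
proof (cases "L mod d = 0")
  case True
  then show ?thesis
    using residue_count_div_mod[OF assms, of s L] div_mult_mod_eq[of L d] assms by simp
next
  case False
  have "residue_count d s (L mod d) i \<le> 1"
    using assms by (intro residue_count_le_1) simp_all
  then have "residue_count d s L i * d \<le> L div d * d + d"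
    using residue_count_div_mod[OF assms, of s L] by (simp add: add_mult_distrib)
  also have "\<dots> < L + d"
    using False div_mult_mod_eq[of L d] by linarith
  finally show ?thesis .
qed

lemma sum_residue_count_consecutive:
  "(\<Sum>j<m. residue_count d (s + j * L) L i) = residue_count d s (m * L) i"
proof (induction m)
  case (Suc m)
  then show ?case
    using residue_count_add[of d s "m * L" L i] by (simp add: add.commute)
qed simp

text \<open>With \<open>(i + (d - 1)) mod d\<close> the predecessor of the residue \<open>i\<close>: an interval of length
  \<open>0 < b < d\<close> meets exactly one residue whose predecessor it misses, namely its start.\<close>
lemma residue_count_start_iff:
  assumes "0 < b" "b < d" "c < d" "i < d"
  shows "residue_count d c b i \<noteq> 0 \<and> residue_count d c b ((i + (d - 1)) mod d) = 0 \<longleftrightarrow> i = c"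
proof
  assume "i = c"
  have "(c + u) mod d \<noteq> (c + (d - 1)) mod d" if "u < b" for u
    using that assms mod_add_right_cancel_nat[of u c d "d - 1"] by (simp add: add.commute)
  then have "residue_count d c b ((c + (d - 1)) mod d) = 0"
    by (meson residue_count_ne_0_iff)
  moreover have "residue_count d c b c \<noteq> 0"
    unfolding residue_count_ne_0_iff using assms by (intro exI[of _ 0]) simp
  ultimately show "residue_count d c b i \<noteq> 0 \<and> residue_count d c b ((i + (d - 1)) mod d) = 0"
    using \<open>i = c\<close> by simp
next
  assume start: "residue_count d c b i \<noteq> 0 \<and> residue_count d c b ((i + (d - 1)) mod d) = 0"
  then obtain u where u: "u < b" "(c + u) mod d = i"
    by (meson residue_count_ne_0_iff)
  show "i = c"
  proof (cases u)
    case (Suc v)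
    have "((c + u) mod d + (d - 1)) mod d = (c + u + (d - 1)) mod d"
      by (rule mod_add_left_eq)
    also have "c + u + (d - 1) = (c + v) + d"
      using Suc assms by simp
    finally have "((c + u) mod d + (d - 1)) mod d = (c + v) mod d"
      by simp
    then have "residue_count d c b ((i + (d - 1)) mod d) \<noteq> 0"
      unfolding residue_count_ne_0_iff using u Suc by (intro exI[of _ v]) auto
    with start show ?thesis
      by simp
  qed (use u assms in simp)
qed

lemma residue_count_start_unique:
  assumes "0 < b" "b < d" "c < d" "c' < d"
    and same: "\<And>i. i < d \<Longrightarrow> residue_count d c b i = residue_count d c' b i"
  shows "c = c'"
proof -
  have pred: "(c' + (d - 1)) mod d < d"
    using assms by simp
  have "residue_count d c' b c' \<noteq> 0 \<and> residue_count d c' b ((c' + (d - 1)) mod d) = 0"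
    using residue_count_start_iff[of b d c' c'] assms by simp
  then have "residue_count d c b c' \<noteq> 0 \<and> residue_count d c b ((c' + (d - 1)) mod d) = 0"
    using same[OF assms(4)] same[OF pred] by simp
  then show ?thesis
    using residue_count_start_iff[of b d c c'] assms by simp
qed

section \<open>Rotating coordinates and normalising signs\<close>

text \<open>Coordinate \<open>i\<close> of \<open>cyclic_shift d n x\<close> is coordinate \<open>i - n\<close> (mod \<open>d\<close>) of \<open>x\<close>; writing
  \<open>-1\<close> as \<open>d - 1\<close> keeps the index arithmetic in \<open>nat\<close>.\<close>
definition cyclic_shift :: "nat \<Rightarrow> nat \<Rightarrow> (nat \<Rightarrow> int) \<Rightarrow> nat \<Rightarrow> int" where
  "cyclic_shift d n x = (\<lambda>i. if i < d then x ((i + n * (d - 1)) mod d) else 0)"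

lemma cyclic_shift_cyclic_shift: "cyclic_shift d m (cyclic_shift d n x) = cyclic_shift d (m + n) x"
proof
  fix i
  have "((i + m * (d - 1)) mod d + n * (d - 1)) mod d = (i + (m + n) * (d - 1)) mod d"
    by (simp add: mod_add_left_eq add_mult_distrib add.assoc)
  then show "cyclic_shift d m (cyclic_shift d n x) i = cyclic_shift d (m + n) x i"
    by (cases "i < d") (simp_all add: cyclic_shift_def)
qed

lemma cyclic_shift_0: "x \<in> zpoints d \<Longrightarrow> cyclic_shift d 0 x = x"
  by (auto simp: cyclic_shift_def zpoints_def fun_eq_iff)

lemma cyclic_shift_self: "x \<in> zpoints d \<Longrightarrow> cyclic_shift d d x = x"
  by (auto simp: cyclic_shift_def zpoints_def fun_eq_iff)

lemma cyclic_shift_zpoints: "cyclic_shift d n x \<in> zpoints d"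
  by (simp add: cyclic_shift_def zpoints_def)

lemma cyclic_shift_uminus: "cyclic_shift d n (- x) = - cyclic_shift d n x"
  by (simp add: cyclic_shift_def fun_eq_iff)

lemma l1norm_cyclic_shift: "l1norm d (cyclic_shift d n x) = l1norm d x"
  unfolding l1norm_def cyclic_shift_def
  using sum_add_mod_lessThan[of "\<lambda>j. \<bar>x j\<bar>" "n * (d - 1)" d] by simp

lemma primitive_cyclic_shift: "primitive d (cyclic_shift d n x) = primitive d x"
proof -
  have "cyclic_shift d n x ` {..<d} = x ` (\<lambda>i. (i + n * (d - 1)) mod d) ` {..<d}"
    by (auto simp: cyclic_shift_def image_iff)
  then show ?thesis
    unfolding primitive_def image_add_mod_lessThan by simp
qed

definition leading_pos :: "nat \<Rightarrow> (nat \<Rightarrow> int) \<Rightarrow> bool" where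
  "leading_pos d z \<longleftrightarrow> (\<exists>i<d. z i > 0 \<and> (\<forall>j<i. z j = 0))"

lemma Pcirc_iff: "x \<in> Pcirc d \<longleftrightarrow> x \<in> zpoints d \<and> primitive d x \<and> leading_pos d x"
  by (simp add: Pcirc_def leading_pos_def)

lemma leading_pos_or_uminus:
  assumes "\<exists>i<d. z i \<noteq> 0"
  shows "leading_pos d z \<or> leading_pos d (- z)"
proof -
  obtain i0 where i0: "i0 < d" "z i0 \<noteq> 0"
    using assms by blast
  define i where "i = (LEAST i. z i \<noteq> 0)"
  have "z i \<noteq> 0"
    using i0(2) unfolding i_def by (rule LeastI)
  moreover have "i \<le> i0"
    using i0(2) unfolding i_def by (rule Least_le)
  moreover have "\<forall>j<i. z j = 0"
    unfolding i_def using not_less_Least by blast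
  ultimately show ?thesis
    using i0
    unfolding leading_pos_def by (cases "z i > 0") (auto intro!: exI[of _ i])
qed

lemma not_leading_pos_uminus: "leading_pos d z \<Longrightarrow> \<not> leading_pos d (- z)"
proof
  assume "leading_pos d z" "leading_pos d (- z)"
  then obtain i j where "z i > 0" "\<forall>k<i. z k = 0" "- z j > 0" "\<forall>k<j. - z k = 0"
    unfolding leading_pos_def by auto
  then show False
    by (cases i j rule: linorder_cases) auto
qed

lemma l1norm_pos_imp_nonzero: "0 < l1norm d x \<Longrightarrow> \<exists>i<d. x i \<noteq> 0"
  by (rule ccontr) (simp add: l1norm_def)

lemma abs_le_l1norm: "i < d \<Longrightarrow> \<bar>x i\<bar> \<le> l1norm d x"
  unfolding l1norm_def by (rule member_le_sum) auto

lemma l1norm_uminus: "l1norm d (- x) = l1norm d x"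
  by (simp add: l1norm_def)

lemma primitive_uminus: "primitive d (- x) = primitive d x"
proof -
  have "(- x) ` {..<d} = uminus ` x ` {..<d}"
    by auto
  then show ?thesis
    by (simp add: primitive_def)
qed

definition sign_normalize :: "nat \<Rightarrow> (nat \<Rightarrow> int) \<Rightarrow> nat \<Rightarrow> int" where
  "sign_normalize d z = (if leading_pos d z then z else - z)"

lemma abs_sign_normalize: "\<bar>sign_normalize d z i\<bar> = \<bar>z i\<bar>"
  by (simp add: sign_normalize_def)

lemma sign_normalize_uminus: "\<exists>i<d. z i \<noteq> 0 \<Longrightarrow> sign_normalize d (- z) = sign_normalize d z"
  using leading_pos_or_uminus[of d z] not_leading_pos_uminus[of d z]
  by (auto simp: sign_normalize_def)

definition sphereP :: "nat \<Rightarrow> nat \<Rightarrow> (nat \<Rightarrow> int) set" where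
  "sphereP d p = {x \<in> Pcirc d. l1norm d x = int p}"

lemma sign_normalize_in_sphereP:
  assumes "z \<in> zpoints d" "primitive d z" "l1norm d z = int p" "p > 0"
  shows "sign_normalize d z \<in> sphereP d p"
proof -
  have "leading_pos d (sign_normalize d z)"
    using leading_pos_or_uminus[OF l1norm_pos_imp_nonzero[of d z]] assms by (auto simp: sign_normalize_def)
  moreover have "- z \<in> zpoints d"
    using assms(1) by (simp add: zpoints_def)
  ultimately show ?thesis
    using assms by (auto simp: sphereP_def Pcirc_iff sign_normalize_def primitive_uminus l1norm_uminus)
qed

text \<open>A rotation need not preserve the sign condition defining \<^const>\<open>Pcirc\<close>, so it is followed by
  the choice of sign that restores it.\<close>
definition shiftP :: "nat \<Rightarrow> (nat \<Rightarrow> int) \<Rightarrow> nat \<Rightarrow> int" where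
  "shiftP d x = sign_normalize d (cyclic_shift d 1 x)"

lemma shiftP_in_sphereP: "x \<in> sphereP d p \<Longrightarrow> p > 0 \<Longrightarrow> shiftP d x \<in> sphereP d p"
  unfolding shiftP_def
  by (intro sign_normalize_in_sphereP)
    (auto simp: sphereP_def Pcirc_iff cyclic_shift_zpoints primitive_cyclic_shift l1norm_cyclic_shift)

lemma funpow_shiftP:
  assumes "x \<in> sphereP d p" "p > 0"
  shows "(shiftP d ^^ n) x = sign_normalize d (cyclic_shift d n x)"
proof (induction n)
  case 0
  then show ?case
    using assms(1) by (simp add: sphereP_def Pcirc_iff cyclic_shift_0 sign_normalize_def)
next
  case (Suc n)
  have nonzero: "\<exists>i<d. cyclic_shift d (Suc n) x i \<noteq> 0"
    using assms by (intro l1norm_pos_imp_nonzero) (simp add: l1norm_cyclic_shift sphereP_def)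
  have "(shiftP d ^^ Suc n) x = shiftP d (sign_normalize d (cyclic_shift d n x))"
    using Suc.IH by simp
  also have "\<dots> = sign_normalize d (cyclic_shift d (Suc n) x)"
    unfolding shiftP_def sign_normalize_def[of d "cyclic_shift d n x"]
    by (simp add: cyclic_shift_cyclic_shift cyclic_shift_uminus sign_normalize_uminus[OF nonzero])
  finally show ?case .
qed

lemma funpow_shiftP_self: "x \<in> sphereP d p \<Longrightarrow> p > 0 \<Longrightarrow> (shiftP d ^^ d) x = x"
  by (simp add: funpow_shiftP cyclic_shift_self sphereP_def Pcirc_iff sign_normalize_def)

lemma inj_on_shiftP:
  assumes "d > 0" "p > 0"
  shows "inj_on (shiftP d) (sphereP d p)"
proof (rule inj_onI)
  fix x y assume x: "x \<in> sphereP d p" and y: "y \<in> sphereP d p" and eq: "shiftP d x = shiftP d y"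
  obtain e where e: "d = Suc e"
    using assms(1) by (cases d) auto
  have "x = (shiftP d ^^ e) (shiftP d x)"
    using funpow_shiftP_self[OF x assms(2)] by (simp add: e funpow_Suc_right del: funpow.simps)
  also have "\<dots> = y"
    using funpow_shiftP_self[OF y assms(2)] eq by (simp add: e funpow_Suc_right del: funpow.simps)
  finally show "x = y" .
qed

lemma abs_shiftP_Suc: "Suc i < d \<Longrightarrow> \<bar>shiftP d x (Suc i)\<bar> = \<bar>x i\<bar>"
  by (simp add: shiftP_def abs_sign_normalize cyclic_shift_def)

lemma finite_l1norm_le: "finite {x \<in> zpoints d. l1norm d x \<le> int p}"
proof (rule finite_subset)
  show "{x \<in> zpoints d. l1norm d x \<le> int p} \<subseteq>
      {x. \<forall>i. (i \<in> {..<d} \<longrightarrow> x i \<in> {-int p..int p}) \<and> (i \<notin> {..<d} \<longrightarrow> x i = 0)}"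
  proof clarify
    fix x i assume x: "x \<in> zpoints d" "l1norm d x \<le> int p"
    show "(i \<in> {..<d} \<longrightarrow> x i \<in> {-int p..int p}) \<and> (i \<notin> {..<d} \<longrightarrow> x i = 0)"
      using x abs_le_l1norm[of i d x] by (auto simp: zpoints_def)
  qed
qed (rule finite_set_of_finite_funs; simp)

lemma finite_ballP: "finite (ballP d p)"
  by (rule finite_subset[OF _ finite_l1norm_le]) (auto simp: ballP_def Pcirc_def)

lemma finite_sphereP: "finite (sphereP d p)"
  by (rule finite_subset[OF _ finite_l1norm_le]) (auto simp: sphereP_def Pcirc_def)

definition coord_load :: "(nat \<Rightarrow> int) set \<Rightarrow> nat \<Rightarrow> int" where
  "coord_load X i = (\<Sum>x\<in>X. \<bar>x i\<bar>)"

lemma coord_load_Un: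
  "finite A \<Longrightarrow> finite B \<Longrightarrow> A \<inter> B = {} \<Longrightarrow> coord_load (A \<union> B) i = coord_load A i + coord_load B i"
  unfolding coord_load_def by (rule sum.union_disjoint)

lemma coord_load_le_kappa: "i < d \<Longrightarrow> coord_load X i \<le> kappa d X"
  unfolding kappa_def coord_load_def by (rule Max_ge) auto

lemma kappa_le: "d > 0 \<Longrightarrow> (\<And>i. i < d \<Longrightarrow> coord_load X i \<le> K) \<Longrightarrow> kappa d X \<le> K"
  unfolding kappa_def coord_load_def by (intro Max.boundedI) auto

lemma kappa_attained: "d > 0 \<Longrightarrow> \<exists>i<d. kappa d X = coord_load X i"
proof -
  assume "d > 0"
  then have "kappa d X \<in> coord_load X ` {..<d}"
    unfolding kappa_def coord_load_def by (intro Max_in) auto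
  then show ?thesis
    by auto
qed

lemma image_Diff_invariant_subset:
  assumes "inj_on f V" "f ` V \<subseteq> V" "finite A" "A \<subseteq> V" "f ` A \<subseteq> A"
  shows "f ` (V - A) \<subseteq> V - A"
proof -
  have "f ` A = A"
    using assms by (intro endo_inj_surj) (auto intro: inj_on_subset)
  then show ?thesis
    using assms(1,2,4) by (auto dest: inj_onD)
qed

lemma funpow_orbit:
  assumes "x \<in> V" "f ` V \<subseteq> V" "(f ^^ d) x = x" "d > 0"
  defines "Orb \<equiv> (\<lambda>n. (f ^^ n) x) ` {..<d}"
  shows "Orb \<subseteq> V" "f ` Orb \<subseteq> Orb" "x \<in> Orb" "card Orb \<le> d"
proof -
  have "(f ^^ n) x \<in> V" for n
    by (induction n) (use assms(1,2) in auto)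
  then show "Orb \<subseteq> V"
    unfolding Orb_def by blast
  show "f ` Orb \<subseteq> Orb"
  proof
    fix y assume "y \<in> f ` Orb"
    then obtain n where n: "n < d" "y = (f ^^ Suc n) x"
      unfolding Orb_def by auto
    show "y \<in> Orb"
    proof (cases "Suc n = d")
      case True
      then show ?thesis
        unfolding Orb_def using n assms(3,4) by (intro image_eqI[of _ _ 0]) auto
    next
      case False
      then show ?thesis
        unfolding Orb_def using n by (intro image_eqI[of _ _ "Suc n"]) auto
    qed
  qed
  show "x \<in> Orb"
    unfolding Orb_def using assms(4) by (intro image_eqI[of _ _ 0]) auto
  show "card Orb \<le> d"
    unfolding Orb_def using card_image_le[of "{..<d}" "\<lambda>n. (f ^^ n) x"] by simp
qed

text \<open>\<open>G\<close> is built greedily from whole orbits of \<open>f\<close>, each of which has at most \<open>d\<close> elements.\<close>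
lemma invariant_subset_card_approx:
  assumes "finite V" "f ` V \<subseteq> V" "inj_on f V" "d > 0" "\<And>x. x \<in> V \<Longrightarrow> (f ^^ d) x = x"
  shows "\<exists>G\<subseteq>V. f ` G \<subseteq> G \<and> card G \<le> m \<and> (G = V \<or> m < card G + d)"
  using assms
proof (induction "card V" arbitrary: V rule: less_induct)
  case less
  show ?case
  proof (cases "V = {}")
    case False
    then obtain x where x: "x \<in> V"
      by blast
    define Orb where "Orb = (\<lambda>n. (f ^^ n) x) ` {..<d}"
    note orbit = funpow_orbit[OF x less.prems(2) less.prems(5)[OF x] less.prems(4), folded Orb_def]
    have fin: "finite Orb"
      unfolding Orb_def by simp
    have smaller: "card (V - Orb) < card V"
      using x less.prems(1) orbit(1,3) by (intro psubset_card_mono) auto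
    have card_V: "card V \<le> card (V - Orb) + d"
      using card_Diff_subset[OF fin orbit(1)] card_mono[OF less.prems(1) orbit(1)] orbit(4) by linarith
    have "finite (V - Orb)"
      using less.prems(1) by simp
    moreover have "f ` (V - Orb) \<subseteq> V - Orb"
      using image_Diff_invariant_subset[OF less.prems(3,2) fin orbit(1,2)] .
    moreover have "inj_on f (V - Orb)"
      using less.prems(3) by (rule inj_on_subset) blast
    moreover have "(f ^^ d) y = y" if "y \<in> V - Orb" for y
      using that less.prems(5) by blast
    ultimately obtain G where
      G: "G \<subseteq> V - Orb" "f ` G \<subseteq> G" "card G \<le> m" "G = V - Orb \<or> m < card G + d"
      using less.hyps[OF smaller _ _ _ less.prems(4)] by blast
    show ?thesis
    proof (cases "G = V - Orb \<and> card V \<le> m")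
      case True
      then show ?thesis
        using less.prems(2) by (intro exI[of _ V]) auto
    next
      case False
      with G(4) card_V have "m < card G + d"
        by auto
      with G(1-3) show ?thesis
        by (intro exI[of _ G]) auto
    qed
  qed simp
qed

lemma coord_load_Suc_shiftP_invariant:
  assumes "d > 0" "p > 0" "Z \<subseteq> sphereP d p" "shiftP d ` Z \<subseteq> Z" "Suc i < d"
  shows "coord_load Z (Suc i) = coord_load Z i"
proof -
  have inj: "inj_on (shiftP d) Z"
    using inj_on_shiftP[OF assms(1,2)] assms(3) by (rule inj_on_subset)
  have "shiftP d ` Z = Z"
    using finite_subset[OF assms(3) finite_sphereP] assms(4) inj by (rule endo_inj_surj)
  then have "coord_load Z (Suc i) = (\<Sum>z\<in>Z. \<bar>shiftP d z (Suc i)\<bar>)"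
    unfolding coord_load_def using sum.reindex[OF inj, of "\<lambda>y. \<bar>y (Suc i)\<bar>"] by simp
  then show ?thesis
    unfolding coord_load_def using abs_shiftP_Suc[OF assms(5)] by simp
qed

lemma coord_load_shiftP_invariant:
  assumes "d > 0" "p > 0" "Z \<subseteq> sphereP d p" "shiftP d ` Z \<subseteq> Z" "i < d"
  shows "int d * coord_load Z i = int p * int (card Z)"
proof -
  have same: "coord_load Z i = coord_load Z 0" if "i < d" for i
    using that coord_load_Suc_shiftP_invariant[OF assms(1-4)] by (induction i) auto
  have "(\<Sum>i<d. coord_load Z i) = (\<Sum>i<d. coord_load Z 0)"
    by (rule sum.cong) (auto intro: same)
  then have "int d * coord_load Z 0 = (\<Sum>i<d. coord_load Z i)"
    by simp
  also have "\<dots> = (\<Sum>z\<in>Z. l1norm d z)"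
    unfolding coord_load_def l1norm_def by (rule sum.swap)
  also have "\<dots> = int p * int (card Z)"
    using assms(3) by (simp add: sphereP_def subset_iff)
  finally show ?thesis
    using same[OF assms(5)] by simp
qed

section \<open>Block points\<close>

text \<open>Coordinate \<open>i\<close> of \<open>block_point d p s\<close> counts the integers of \<open>[s, s + p)\<close> that are
  \<open>i\<close> mod \<open>d\<close>, so all coordinates are \<open>\<lfloor>p/d\<rfloor>\<close> or \<open>\<lceil>p/d\<rceil>\<close>.\<close>
definition block_point :: "nat \<Rightarrow> nat \<Rightarrow> nat \<Rightarrow> nat \<Rightarrow> int" where
  "block_point d p s = (\<lambda>i. if i < d then int (residue_count d s p i) else 0)"

lemma block_point_mod_start: "block_point d p (s mod d) = block_point d p s"
  unfolding block_point_def residue_count_mod_start ..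

lemma block_point_div_mod:
  "i < d \<Longrightarrow> block_point d p s i = int (p div d) + int (residue_count d s (p mod d) i)"
  using residue_count_div_mod[of i d s p] by (simp add: block_point_def)

lemma l1norm_block_point: "d > 0 \<Longrightarrow> l1norm d (block_point d p s) = int p"
  using sum_residue_count[of d s p] by (simp add: l1norm_def block_point_def flip: of_nat_sum)

lemma Gcd_consecutive_int: "(a::int) \<in> A \<Longrightarrow> a + 1 \<in> A \<Longrightarrow> Gcd A = 1"
proof -
  assume "a \<in> A" "a + 1 \<in> A"
  then have "Gcd A dvd (a + 1) - a"
    by (intro dvd_diff Gcd_dvd)
  then show ?thesis
    using Gcd_int_greater_eq_0[of A] by (simp add: zdvd1_eq)
qed

lemma primitive_block_point:
  assumes d: "d > 0" and "0 < p mod d"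
  shows "primitive d (block_point d p s)"
proof -
  \<comment> \<open>the start of the interval and its predecessor carry the coordinates \<open>\<lceil>p/d\<rceil>\<close> and \<open>\<lfloor>p/d\<rfloor>\<close>\<close>
  define c where "c = s mod d"
  define c0 where "c0 = (c + (d - 1)) mod d"
  have c: "c < d" "c0 < d"
    using d by (simp_all add: c_def c0_def)
  have "residue_count d c (p mod d) c \<noteq> 0 \<and> residue_count d c (p mod d) c0 = 0"
    unfolding c0_def using residue_count_start_iff[of "p mod d" d c c] assms c by simp
  moreover have "residue_count d c (p mod d) c \<le> 1"
    using c d by (intro residue_count_le_1) simp_all
  ultimately have "block_point d p s c = int (p div d) + 1" "block_point d p s c0 = int (p div d)"
    using block_point_div_mod[OF c(1), of p s] block_point_div_mod[OF c(2), of p s]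
    by (simp_all add: c_def residue_count_mod_start)
  then have "int (p div d) \<in> block_point d p s ` {..<d}" "int (p div d) + 1 \<in> block_point d p s ` {..<d}"
    using c by (metis image_eqI lessThan_iff)+
  then show ?thesis
    unfolding primitive_def by (rule Gcd_consecutive_int)
qed

lemma block_point_in_sphereP:
  assumes d: "d > 0" and "0 < p mod d"
  shows "block_point d p s \<in> sphereP d p"
proof -
  have "l1norm d (block_point d p s) = int p"
    using l1norm_block_point[OF d] .
  moreover have "p > 0"
    using assms(2) by (cases p) auto
  ultimately have "leading_pos d (block_point d p s) \<or> leading_pos d (- block_point d p s)"
    by (intro leading_pos_or_uminus l1norm_pos_imp_nonzero) simp
  moreover have "\<not> leading_pos d (- block_point d p s)"
    by (auto simp: leading_pos_def block_point_def)
  ultimately show ?thesis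
    using primitive_block_point[OF assms] l1norm_block_point[OF d]
    by (auto simp: sphereP_def Pcirc_iff zpoints_def block_point_def)
qed

lemma shiftP_block_point:
  assumes "d > 0" "0 < p mod d"
  shows "shiftP d (block_point d p s) = block_point d p (Suc s)"
proof -
  have "cyclic_shift d 1 (block_point d p s) = block_point d p (Suc s)"
    by (auto simp: fun_eq_iff cyclic_shift_def block_point_def residue_count_Suc_start)
  moreover have "leading_pos d (block_point d p (Suc s))"
    using block_point_in_sphereP[OF assms] by (simp add: sphereP_def Pcirc_iff)
  ultimately show ?thesis
    by (simp add: shiftP_def sign_normalize_def)
qed

lemma block_point_inj:
  assumes "0 < p mod d" "c < d" "c' < d" "block_point d p c = block_point d p c'"
  shows "c = c'"
proof (rule residue_count_start_unique)
  show "residue_count d c (p mod d) i = residue_count d c' (p mod d) i" if "i < d" for i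
    using assms(4) block_point_div_mod[OF that, of p c] block_point_div_mod[OF that, of p c']
    by (metis add_left_cancel of_nat_eq_iff)
qed (use assms in auto)

lemma block_orbit:
  assumes d: "d > 0" and "0 < p mod d"
  shows "block_point d p ` {..<d} \<subseteq> sphereP d p"
    and "card (block_point d p ` {..<d}) = d"
    and "shiftP d ` block_point d p ` {..<d} \<subseteq> block_point d p ` {..<d}"
proof -
  show "block_point d p ` {..<d} \<subseteq> sphereP d p"
    using block_point_in_sphereP[OF assms] by blast
  have "inj_on (block_point d p) {..<d}"
    using block_point_inj[OF assms(2)] by (intro inj_onI) auto
  then show "card (block_point d p ` {..<d}) = d"
    by (simp add: card_image)
  have "shiftP d (block_point d p c) = block_point d p (Suc c mod d)" for c
    by (simp add: shiftP_block_point[OF assms] block_point_mod_start)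
  then show "shiftP d ` block_point d p ` {..<d} \<subseteq> block_point d p ` {..<d}"
    using d by auto
qed

section \<open>Staggered blocks\<close>

text \<open>Within a run of \<open>d div gcd p d\<close> consecutive indices the intervals
  \<open>[stagger d p n, stagger d p n + p)\<close> are adjacent and tile an interval of length \<open>lcm p d\<close>,
  which meets every residue equally often; each new run is shifted by one more, which keeps the
  starting residues of the first \<open>d\<close> intervals distinct.\<close>
definition stagger :: "nat \<Rightarrow> nat \<Rightarrow> nat \<Rightarrow> nat" where
  "stagger d p n = n * p + n div (d div gcd p d)"

lemma sum_residue_count_stagger_run:
  assumes "j \<le> d div gcd p d"
  shows "(\<Sum>n<j. residue_count d (stagger d p (q * (d div gcd p d) + n)) p i)
    = residue_count d (q + q * (d div gcd p d) * p) (j * p) i"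
proof -
  let ?e = "d div gcd p d"
  have "stagger d p (q * ?e + n) = (q + q * ?e * p) + n * p" if "n < j" for n
  proof -
    have "(q * ?e + n) div ?e = q"
      using that assms by simp
    then show ?thesis
      by (simp add: stagger_def algebra_simps)
  qed
  then have "(\<Sum>n<j. residue_count d (stagger d p (q * ?e + n)) p i)
      = (\<Sum>n<j. residue_count d ((q + q * ?e * p) + n * p) p i)"
    by simp
  also have "\<dots> = residue_count d (q + q * ?e * p) (j * p) i"
    by (rule sum_residue_count_consecutive)
  finally show ?thesis .
qed

lemma div_gcd_mult_swap: "(d div gcd p d) * p = d * (p div gcd p d)"
  for d p :: nat
  by (simp add: div_mult_swap dvd_div_mult mult.commute)

lemma sum_residue_count_stagger_less:
  assumes "i < d"
  shows "(\<Sum>n<t. residue_count d (stagger d p n) p i) * d < t * p + d"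
proof -
  let ?e = "d div gcd p d" and ?f = "\<lambda>n. residue_count d (stagger d p n) p i"
  have e: "?e > 0"
    using assms by (simp add: div_greater_zero_iff gcd_le2_nat)
  have full_runs: "(\<Sum>n<Q * ?e. ?f n) = Q * (p div gcd p d)" for Q
  proof (induction Q)
    case (Suc Q)
    have "(\<Sum>n<Q * ?e + ?e. ?f n) = Q * (p div gcd p d) + residue_count d (Q + Q * ?e * p) (?e * p) i"
      using Suc sum_residue_count_stagger_run[of ?e d p Q i] by (simp add: sum_lessThan_add_nat)
    also have "residue_count d (Q + Q * ?e * p) (?e * p) i = p div gcd p d"
      unfolding div_gcd_mult_swap using assms by (rule residue_count_mult)
    finally show ?case
      by (simp add: add.commute)
  qed simp
  define Q j where "Q = t div ?e" and "j = t mod ?e"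
  have t: "t = Q * ?e + j"
    unfolding Q_def j_def by (rule div_mult_mod_eq[symmetric])
  have "j < ?e"
    using e by (simp add: j_def)
  then have "(\<Sum>n<t. ?f n) = Q * (p div gcd p d) + residue_count d (Q + Q * ?e * p) (j * p) i"
    unfolding t sum_lessThan_add_nat full_runs using sum_residue_count_stagger_run[of j d p Q i] by simp
  then have "(\<Sum>n<t. ?f n) * d
      = Q * (p div gcd p d * d) + residue_count d (Q + Q * ?e * p) (j * p) i * d"
    by (simp add: algebra_simps)
  also have "p div gcd p d * d = ?e * p"
    using div_gcd_mult_swap[of d p] by (simp add: mult.commute)
  also have "Q * (?e * p) + residue_count d (Q + Q * ?e * p) (j * p) i * d
      < Q * (?e * p) + (j * p + d)"
    using residue_count_less_ceiling[OF assms] by simp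
  also have "\<dots> = t * p + d"
    using assms by (simp add: t algebra_simps)
  finally show ?thesis .
qed

lemma stagger_mod_inj:
  assumes "n < d" "m < d" "stagger d p n mod d = stagger d p m mod d"
  shows "n = m"
proof -
  define g e p' where "g = gcd p d" and "e = d div g" and "p' = p div g"
  have d: "d = g * e" and p: "p = g * p'"
    by (simp_all add: g_def e_def p'_def)
  have "g > 0"
    using assms(1) by (simp add: g_def)
  have "e > 0"
    using assms(1) d by (cases e) auto
  have "coprime e p'"
    using div_gcd_coprime[of d p] assms(1) by (simp add: e_def p'_def g_def gcd.commute coprime_commute)
  have quot: "n div e < g" "m div e < g"
    using assms(1,2) \<open>e > 0\<close> d by (simp_all add: div_less_iff_less_mult mult.commute)
  have "int (stagger d p n) mod int d = int (stagger d p m) mod int d"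
    using assms(3) by (metis of_nat_mod)
  then have "int d dvd int (stagger d p n) - int (stagger d p m)"
    by (simp add: mod_eq_dvd_iff)
  then have diff: "int d dvd (int n - int m) * int p + (int (n div e) - int (m div e))"
    by (simp add: stagger_def e_def g_def algebra_simps)
  have "int g dvd int d"
    using d by simp
  then have "int g dvd (int n - int m) * int p + (int (n div e) - int (m div e))"
    using diff by (rule dvd_trans)
  then have "int g dvd int (n div e) - int (m div e)"
    using p by (simp add: dvd_add_right_iff)
  then have "n div e = m div e"
    using quot by (simp add: mod_eq_dvd_iff[symmetric] flip: of_nat_mod)
  with diff have "int g * int e dvd int g * ((int n - int m) * int p')"
    by (simp add: d p algebra_simps)
  then have "int e dvd (int n - int m) * int p'"
    using \<open>g > 0\<close> by simp
  then have "int e dvd int n - int m"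
    using \<open>coprime e p'\<close> by (simp add: coprime_dvd_mult_left_iff)
  then have "n mod e = m mod e"
    by (simp add: mod_eq_dvd_iff[symmetric] flip: of_nat_mod)
  with \<open>n div e = m div e\<close> show ?thesis
    by (metis div_mult_mod_eq)
qed

lemma exists_block_subset_coord_load_le:
  assumes "d > 0" "0 < p mod d" "t \<le> d"
  obtains Y where "Y \<subseteq> block_point d p ` {..<d}" "card Y = t"
    "\<And>i. i < d \<Longrightarrow> int d * coord_load Y i < int t * int p + int d"
proof -
  let ?y = "\<lambda>n. block_point d p (stagger d p n mod d)"
  have "inj_on ?y {..<t}"
  proof (rule inj_onI)
    fix n m assume "n \<in> {..<t}" "m \<in> {..<t}" "?y n = ?y m"
    then show "n = m"
      using block_point_inj[OF assms(2)] stagger_mod_inj[of n d m p] assms by simp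
  qed
  have "?y ` {..<t} \<subseteq> block_point d p ` {..<d}"
    using assms(1) by auto
  moreover have "card (?y ` {..<t}) = t"
    using \<open>inj_on ?y {..<t}\<close> by (simp add: card_image)
  moreover have "int d * coord_load (?y ` {..<t}) i < int t * int p + int d" if "i < d" for i
  proof -
    have "coord_load (?y ` {..<t}) i = (\<Sum>n<t. \<bar>?y n i\<bar>)"
      unfolding coord_load_def using sum.reindex[OF \<open>inj_on ?y {..<t}\<close>] by simp
    also have "\<dots> = int (\<Sum>n<t. residue_count d (stagger d p n) p i)"
      using that by (simp add: block_point_def residue_count_mod_start)
    finally show ?thesis
      using sum_residue_count_stagger_less[OF that, of p t]
      by (metis mult.commute of_nat_add of_nat_less_iff of_nat_mult)
  qed
  ultimately show ?thesis
    by (rule that)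
qed

lemma invariant_subset_avoiding_blocks:
  assumes d: "d > 0" and b: "0 < p mod d" and m: "m < card (sphereP d p)"
  obtains G where "G \<subseteq> sphereP d p - block_point d p ` {..<d}" "shiftP d ` G \<subseteq> G"
    "card G \<le> m" "m < card G + d"
proof -
  define T S where "T = sphereP d p" and "S = block_point d p ` {..<d}"
  have p: "p > 0"
    using b by (cases p) auto
  have T: "finite T" "shiftP d ` T \<subseteq> T" "inj_on (shiftP d) T"
    unfolding T_def using finite_sphereP shiftP_in_sphereP[OF _ p] inj_on_shiftP[OF d p] by blast+
  have S: "finite S" "S \<subseteq> T" "card S = d" "shiftP d ` S \<subseteq> S"
    unfolding S_def T_def using block_orbit[OF d b] by simp_all
  have "shiftP d ` (T - S) \<subseteq> T - S"
    using image_Diff_invariant_subset[OF T(3,2) S(1,2,4)] .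
  moreover have "inj_on (shiftP d) (T - S)"
    using T(3) by (rule inj_on_subset) blast
  moreover have "(shiftP d ^^ d) x = x" if "x \<in> T - S" for x
    using that funpow_shiftP_self[OF _ p] unfolding T_def by blast
  ultimately obtain G where G: "G \<subseteq> T - S" "shiftP d ` G \<subseteq> G" "card G \<le> m" "G = T - S \<or> m < card G + d"
    using invariant_subset_card_approx[of "T - S" "shiftP d" d m] T(1) d by blast
  have "card T = card (T - S) + d"
    using card_Diff_subset[OF S(1,2)] card_mono[OF T(1) S(2)] S(3) by linarith
  then have "m < card G + d"
    using G(4) m unfolding T_def by auto
  with G(1-3) show ?thesis
    unfolding T_def S_def by (rule that)
qed

lemma sphereP_subset_card_coord_load_le:
  assumes d: "d > 0" and b: "0 < p mod d"
    and m: "int m * int p \<le> int d * r" "m < card (sphereP d p)"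
  obtains Z where "Z \<subseteq> sphereP d p" "card Z = m" "\<And>i. i < d \<Longrightarrow> coord_load Z i \<le> r"
proof -
  have p: "p > 0"
    using b by (cases p) auto
  obtain G where G: "G \<subseteq> sphereP d p - block_point d p ` {..<d}" "shiftP d ` G \<subseteq> G"
      "card G \<le> m" "m < card G + d"
    by (rule invariant_subset_avoiding_blocks[OF d b m(2)])
  define t where "t = m - card G"
  have "t \<le> d"
    using G(4) by (simp add: t_def)
  then obtain Y where Y: "Y \<subseteq> block_point d p ` {..<d}" "card Y = t"
      "\<And>i. i < d \<Longrightarrow> int d * coord_load Y i < int t * int p + int d"
    using exists_block_subset_coord_load_le[OF d b] by blast
  have fin: "finite G" "finite Y" "G \<inter> Y = {}"
    using finite_subset[of G "sphereP d p"] finite_subset[OF Y(1)] G(1) Y(1) finite_sphereP by auto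
  have "G \<union> Y \<subseteq> sphereP d p"
    using G(1) Y(1) block_orbit(1)[OF d b] by blast
  moreover have "card (G \<union> Y) = m"
    using card_Un_disjoint[OF fin] Y(2) G(3) by (simp add: t_def)
  moreover have "coord_load (G \<union> Y) i \<le> r" if "i < d" for i
  proof -
    have "int d * coord_load G i = int p * int (card G)"
      using coord_load_shiftP_invariant[OF d p _ G(2) that] G(1) by blast
    moreover have "int d * coord_load (G \<union> Y) i = int d * coord_load G i + int d * coord_load Y i"
      by (simp add: coord_load_Un[OF fin] distrib_left)
    moreover have "int m * int p = int t * int p + int p * int (card G)"
      using G(3) by (simp add: t_def of_nat_diff algebra_simps)
    ultimately have "int d * coord_load (G \<union> Y) i < int d * r + int d"
      using Y(3)[OF that] m(1) by linarith
    then have "int d * coord_load (G \<union> Y) i < int d * (r + 1)"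
      by (simp add: distrib_left)
    then show ?thesis
      using d by (simp add: mult_less_cancel_left)
  qed
  ultimately show ?thesis
    by (rule that)
qed

lemma sphereP_subset_coord_load_le:
  assumes d: "d > 0" and b: "0 < p mod d" and r: "0 \<le> r"
    and below: "int d * r < int p * int (card (sphereP d p))"
  obtains Z where "Z \<subseteq> sphereP d p" "int (card Z) = int d * r div int p"
    "\<And>i. i < d \<Longrightarrow> coord_load Z i \<le> r"
proof -
  have p: "p > 0"
    using b by (cases p) auto
  define m where "m = nat (int d * r div int p)"
  have "0 \<le> int d * r div int p"
    using r p by (intro pos_imp_zdiv_nonneg_iff[THEN iffD2]) simp_all
  then have m_eq: "int m = int d * r div int p"
    unfolding m_def by (rule nat_0_le)
  have m_le: "int m * int p \<le> int d * r"
    unfolding m_eq using p by (metis div_mult_mod_eq le_add_same_cancel1 of_nat_0_less_iff pos_mod_sign)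
  then have "int p * int m < int p * int (card (sphereP d p))"
    using below by (metis mult.commute order_le_less_trans)
  then have "m < card (sphereP d p)"
    using p by (simp add: mult_less_cancel_left_pos)
  then obtain Z where "Z \<subseteq> sphereP d p" "card Z = m" "\<And>i. i < d \<Longrightarrow> coord_load Z i \<le> r"
    using sphereP_subset_card_coord_load_le[OF d b m_le] by blast
  with m_eq show ?thesis
    using that by simp
qed

section \<open>The balls \<open>B(d, p)\<close>\<close>

lemma l1norm_Pcirc_ge_1:
  assumes "x \<in> Pcirc d"
  shows "1 \<le> l1norm d x"
proof -
  obtain i where "i < d" "0 < x i"
    using assms unfolding Pcirc_iff leading_pos_def by blast
  then show ?thesis
    using abs_le_l1norm[of i d x] by linarith
qed

lemma kappap_0:
  assumes "d > 0"
  shows "kappap d 0 = 0"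
proof -
  have "ballP d 0 = {}"
    unfolding ballP_def using l1norm_Pcirc_ge_1 by fastforce
  moreover have "(\<lambda>i. \<Sum>x\<in>{}. \<bar>x i\<bar>) ` {..<d} = {0::int}"
    using assms by auto
  ultimately show ?thesis
    by (simp add: kappap_def kappa_def)
qed

lemma ex_kappap_gt:
  assumes "d \<ge> 2"
  shows "\<exists>p>0. int k < kappap d p"
proof -
  define e :: "nat \<Rightarrow> nat \<Rightarrow> int" where "e j = (\<lambda>i. if i = 0 then 1 else if i = 1 then int j else 0)" for j
  have "e j \<in> ballP d (k + 1)" if "j \<le> k" for j
  proof -
    have "e j \<in> zpoints d"
      using assms by (simp add: zpoints_def e_def)
    moreover have "primitive d (e j)"
      unfolding primitive_def using assms by (intro Gcd_1 image_eqI[of _ _ 0]) (simp_all add: e_def)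
    moreover have "leading_pos d (e j)"
      unfolding leading_pos_def using assms by (intro exI[of _ 0]) (simp add: e_def)
    moreover have "l1norm d (e j) = (\<Sum>i<d. (if i = 0 then 1 else 0) + (if i = 1 then int j else 0))"
      unfolding l1norm_def e_def by (intro sum.cong) auto
    then have "l1norm d (e j) = 1 + int j"
      using assms by (simp add: sum.distrib)
    ultimately show ?thesis
      using that by (simp add: ballP_def Pcirc_iff)
  qed
  then have sub: "e ` {..k} \<subseteq> ballP d (k + 1)"
    by auto
  have "inj_on e {..k}"
    by (rule inj_onI) (metis e_def one_neq_zero of_nat_eq_iff)
  then have "int (k + 1) = (\<Sum>x\<in>e ` {..k}. \<bar>x 0\<bar>)"
    unfolding sum.reindex[OF \<open>inj_on e {..k}\<close>] by (simp add: e_def)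
  also have "\<dots> \<le> coord_load (ballP d (k + 1)) 0"
    unfolding coord_load_def using sub by (intro sum_mono2 finite_ballP) auto
  also have "\<dots> \<le> kappap d (k + 1)"
    unfolding kappap_def using assms by (intro coord_load_le_kappa) simp
  finally show ?thesis
    by (intro exI[of _ "k + 1"]) simp
qed

lemma pmin_spec:
  assumes "d \<ge> 2"
  shows "0 < pmin d k" "int k < kappap d (pmin d k)" "kappap d (pmin d k - 1) \<le> int k"
proof -
  have "0 < pmin d k \<and> int k < kappap d (pmin d k)"
    unfolding pmin_def by (rule LeastI_ex) (rule ex_kappap_gt[OF assms])
  then show "0 < pmin d k" "int k < kappap d (pmin d k)"
    by auto
  show "kappap d (pmin d k - 1) \<le> int k"
  proof (cases "pmin d k = 1")
    case True
    then show ?thesis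
      using kappap_0[of d] assms by simp
  next
    case False
    then have "\<not> (0 < pmin d k - 1 \<and> int k < kappap d (pmin d k - 1))"
      using \<open>0 < pmin d k\<close> unfolding pmin_def by (intro not_less_Least) simp
    then show ?thesis
      using False \<open>0 < pmin d k\<close> by simp
  qed
qed

lemma ballP_eq_Un_sphereP:
  assumes "p > 0"
  shows "ballP d p = ballP d (p - 1) \<union> sphereP d p" "ballP d (p - 1) \<inter> sphereP d p = {}"
  using assms by (auto simp: ballP_def sphereP_def)

lemma kappap_le_pred_sphereP:
  assumes "d > 0" "p > 0"
  shows "int d * kappap d p \<le> int d * kappap d (p - 1) + int p * int (card (sphereP d p))"
proof -
  obtain i where i: "i < d" "kappap d p = coord_load (ballP d p) i"
    unfolding kappap_def using kappa_attained[OF assms(1)] by blast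
  have "coord_load (ballP d p) i = coord_load (ballP d (p - 1)) i + coord_load (sphereP d p) i"
    unfolding ballP_eq_Un_sphereP(1)[OF assms(2)]
    using ballP_eq_Un_sphereP(2)[OF assms(2)] by (intro coord_load_Un finite_ballP finite_sphereP)
  moreover have "coord_load (ballP d (p - 1)) i \<le> kappap d (p - 1)"
    unfolding kappap_def using i(1) by (rule coord_load_le_kappa)
  moreover have "int d * coord_load (sphereP d p) i = int p * int (card (sphereP d p))"
    using shiftP_in_sphereP[OF _ assms(2)] by (intro coord_load_shiftP_invariant assms i(1)) auto
  ultimately show ?thesis
    using i(2) assms(1) by (simp add: distrib_left)
qed

lemma ballP_pred_Un_sphereP_subset:
  assumes "d > 0" "p > 0" "Z \<subseteq> sphereP d p" "\<And>i. i < d \<Longrightarrow> coord_load Z i \<le> r"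
  shows "ballP d (p - 1) \<union> Z \<subseteq> Pcirc d" "finite (ballP d (p - 1) \<union> Z)"
    "kappa d (ballP d (p - 1) \<union> Z) \<le> kappap d (p - 1) + r"
    "card (ballP d (p - 1) \<union> Z) = Np d (p - 1) + card Z"
proof -
  have fin: "finite (ballP d (p - 1))" "finite Z" "ballP d (p - 1) \<inter> Z = {}"
    using assms(3) ballP_eq_Un_sphereP(2)[OF assms(2)] finite_subset[OF assms(3) finite_sphereP]
    by (auto simp: finite_ballP)
  then show "finite (ballP d (p - 1) \<union> Z)" "card (ballP d (p - 1) \<union> Z) = Np d (p - 1) + card Z"
    by (simp_all add: card_Un_disjoint Np_def)
  show "ballP d (p - 1) \<union> Z \<subseteq> Pcirc d"
    using assms(3) by (auto simp: ballP_def sphereP_def)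
  show "kappa d (ballP d (p - 1) \<union> Z) \<le> kappap d (p - 1) + r"
  proof (rule kappa_le[OF assms(1)])
    fix i assume "i < d"
    then have "coord_load (ballP d (p - 1)) i \<le> kappap d (p - 1)"
      unfolding kappap_def by (rule coord_load_le_kappa)
    with assms(4)[OF \<open>i < d\<close>] show "coord_load (ballP d (p - 1) \<union> Z) i \<le> kappap d (p - 1) + r"
      unfolding coord_load_Un[OF fin] by simp
  qed
qed

lemma floor_lam:
  "\<lfloor>lam d k\<rfloor> = int (Np d (pmin d k - 1)) + int d * (int k - kappap d (pmin d k - 1)) div int (pmin d k)"
proof -
  let ?a = "int (Np d (pmin d k - 1))" and ?b = "int d * (int k - kappap d (pmin d k - 1))"
    and ?c = "int (pmin d k)"
  have "\<lfloor>lam d k\<rfloor> = \<lfloor>real_of_int ?b / real_of_int ?c + real_of_int ?a\<rfloor>"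
    by (simp add: lam_def Let_def add.commute)
  also have "\<dots> = \<lfloor>real_of_int ?b / real_of_int ?c\<rfloor> + ?a"
    by (rule floor_add_int[symmetric])
  finally show ?thesis
    by (simp only: floor_divide_of_int_eq add.commute)
qed

theorem lemma4p1:
  fixes d k :: nat
  assumes "d > 0" and "k > 0"
    and "\<not> d dvd pmin d k"
  shows "\<exists>X. X \<subseteq> Pcirc d \<and> finite X \<and> kappa d X \<le> int k
             \<and> int (card X) = \<lfloor>lam d k\<rfloor>"
proof -
  define p K r where "p = pmin d k" and "K = kappap d (p - 1)" and "r = int k - K"
  have "d \<ge> 2"
    using assms(1,3) by (cases "d = 1") auto
  then have p: "0 < p" "int k < kappap d p" "K \<le> int k"
    unfolding p_def K_def by (rule pmin_spec)+
  have "int d * kappap d p \<le> int d * K + int p * int (card (sphereP d p))"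
    unfolding K_def by (rule kappap_le_pred_sphereP[OF assms(1) p(1)])
  moreover have "int d * int k < int d * kappap d p"
    using p(2) assms(1) by simp
  ultimately have "int d * r < int p * int (card (sphereP d p))"
    unfolding r_def right_diff_distrib by linarith
  moreover have "0 < p mod d"
    using assms(3) unfolding p_def by (simp add: mod_greater_zero_iff_not_dvd)
  moreover have "0 \<le> r"
    using p(3) by (simp add: r_def)
  ultimately obtain Z where Z: "Z \<subseteq> sphereP d p" "int (card Z) = int d * r div int p"
      "\<And>i. i < d \<Longrightarrow> coord_load Z i \<le> r"
    using sphereP_subset_coord_load_le[OF assms(1)] by blast
  note X = ballP_pred_Un_sphereP_subset[OF assms(1) p(1) Z(1,3)]
  have "int (card (ballP d (p - 1) \<union> Z)) = int (Np d (p - 1)) + int d * r div int p"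
    using Z(2) X(4) by simp
  also have "\<dots> = \<lfloor>lam d k\<rfloor>"
    unfolding floor_lam by (simp add: p_def K_def r_def)
  finally have "int (card (ballP d (p - 1) \<union> Z)) = \<lfloor>lam d k\<rfloor>" .
  with X(1-3) show ?thesis
    unfolding K_def[symmetric] r_def by (intro exI[of _ "ballP d (p - 1) \<union> Z"]) simp
qed

end
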